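(* Let $F$ be a positive integer, $l$ a non-negative integer, and $S$ a numerical semigroup with $\mathrm{F}(S)=F$. The following are equivalent: (1) $\mathrm{l}(S)=l$ and $l\ge 2$; (2) there exist a numerical semigroup $T$ with $\mathrm{F}(T)=F$ and $x\in\mathrm{msg}(T)$ such that $\mathrm{l}(T)=l-2$, $\frac{F}{2}<x<F$, and $S=T\setminus\{x\}$.
   Context: A numerical semigroup is a subset $S\subseteq\mathbb{N}$ closed under addition with $0\in S$ and $\mathbb{N}\setminus S$ finite; $\mathrm{F}(S)=\max(\mathbb{Z}\setminus S)$. $\mathrm{msg}(T)$ is the minimal system of generators of $T$. $\mathrm{N}(S)=\{s\in S\mid s<\mathrm{F}(S)\}$, $\mathrm{L}(S)=\{x\in\mathbb{N}\setminus S\mid \mathrm{F}(S)-x\notin \mathrm{N}(S)\}$, $\mathrm{l}(S)=\#\mathrm{L}(S)$. *)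

theory Defs
  imports Main
begin

definition numerical_semigroup :: "nat set \<Rightarrow> bool" where
  "numerical_semigroup S \<longleftrightarrow> 0 \<in> S \<and> (\<forall>a\<in>S. \<forall>b\<in>S. a + b \<in> S) \<and> finite (UNIV - S)"

definition frobenius :: "nat set \<Rightarrow> int" where
  "frobenius S = (if UNIV - S = {} then -1 else int (Max (UNIV - S)))"

definition msg :: "nat set \<Rightarrow> nat set" where
  "msg S = {x \<in> S. x \<noteq> 0 \<and> \<not> (\<exists>a\<in>S. \<exists>b\<in>S. a \<noteq> 0 \<and> b \<noteq> 0 \<and> x = a + b)}"

definition Nset :: "nat set \<Rightarrow> nat set" where
  "Nset S = {s \<in> S. int s < frobenius S}"

definition Lset :: "nat set \<Rightarrow> nat set" where
  "Lset S = {x. x \<notin> S \<and> \<not> (frobenius S - int x \<ge> 0 \<and> nat (frobenius S - int x) \<in> Nset S)}"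

definition lnum :: "nat set \<Rightarrow> nat" where
  "lnum S = card (Lset S)"

end

theory Submission
  imports Defs
begin

text \<open>With \<open>F = F(S)\<close>, \<open>L(S)\<close> consists of the gaps \<open>y\<close> with \<open>F - y\<close> also a gap, a set symmetric
  under \<open>y \<mapsto> F - y\<close>. Removing a generator \<open>x\<close> of \<open>T\<close> with \<open>F/2 < x < F\<close> creates exactly the two new
  elements \<open>x\<close> and \<open>F - x\<close> of \<open>L\<close>. Conversely, if \<open>l(S) \<ge> 2\<close>, symmetry forces the largest element
  \<open>x\<close> of \<open>L(S)\<close> above \<open>F/2\<close>, and maximality of \<open>x\<close> makes \<open>S \<union> {x}\<close> a numerical semigroup with \<open>x\<close>
  as a minimal generator.\<close>

lemma frobenius_eqI:
  assumes "n \<notin> S" and "\<And>m. n < m \<Longrightarrow> m \<in> S"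
  shows "frobenius S = int n"
proof -
  have "UNIV - S \<subseteq> {..n}" using assms(2) by (auto simp: not_less[symmetric])
  then have "Max (UNIV - S) = n"
    using assms(1) by (intro Max_eqI) (auto intro: finite_subset)
  then show ?thesis using assms(1) unfolding frobenius_def by auto
qed

lemma frobenius_eq_int_iff:
  assumes "numerical_semigroup S"
  shows "frobenius S = int n \<longleftrightarrow> n \<notin> S \<and> (\<forall>m>n. m \<in> S)"
proof
  assume F: "frobenius S = int n"
  have fin: "finite (UNIV - S)" using assms unfolding numerical_semigroup_def by auto
  have ne: "UNIV - S \<noteq> {}" using F unfolding frobenius_def by (auto split: if_splits)
  have "n = Max (UNIV - S)" using F ne unfolding frobenius_def by auto
  then show "n \<notin> S \<and> (\<forall>m>n. m \<in> S)"
    using Max_in[OF fin ne] Max_ge[OF fin] by (metis Diff_iff UNIV_I not_le)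
qed (auto intro: frobenius_eqI)

lemma Lset_eq:
  assumes "0 \<in> S" and "n \<notin> S" and "\<And>m. n < m \<Longrightarrow> m \<in> S"
  shows "Lset S = {y. y \<notin> S \<and> y \<le> n \<and> n - y \<notin> S}"
proof -
  have frob: "frobenius S = int n" using assms(2,3) by (rule frobenius_eqI)
  have "y \<in> Lset S \<longleftrightarrow> y \<notin> S \<and> y \<le> n \<and> n - y \<notin> S" for y
  proof (cases "y \<in> S")
    case False
    then have "0 < y" "y \<le> n" using assms(1,3) by (metis gr0I, metis not_le)
    then have "nat (int n - int y) = n - y" "n - y < n" by auto
    then show ?thesis using False \<open>y \<le> n\<close> unfolding Lset_def Nset_def frob by auto
  qed (simp add: Lset_def)
  then show ?thesis by blast
qed

lemma finite_Lset:
  assumes "0 \<in> S" and "n \<notin> S" and "\<And>m. n < m \<Longrightarrow> m \<in> S"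
  shows "finite (Lset S)"
proof (rule finite_subset)
  show "Lset S \<subseteq> {..n}" using Lset_eq[OF assms] by auto
qed simp

lemma lnum_Diff_large_element:
  assumes T: "numerical_semigroup T" "frobenius T = int n"
    and x: "x \<in> T" "0 < x" "x < n" "n < 2 * x"
  shows "lnum (T - {x}) = lnum T + 2"
proof -
  have frob: "0 \<in> T" "n \<notin> T" "\<And>m. n < m \<Longrightarrow> m \<in> T"
    using T unfolding frobenius_eq_int_iff[OF T(1)] numerical_semigroup_def by auto
  have "n - x \<notin> T"
  proof
    assume "n - x \<in> T"
    then have "(n - x) + x \<in> T" using T(1) x(1) unfolding numerical_semigroup_def by blast
    then show False using frob(2) x(3) by simp
  qed
  have LT: "Lset T = {y. y \<notin> T \<and> y \<le> n \<and> n - y \<notin> T}"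
    using frob by (rule Lset_eq)
  have "Lset (T - {x}) = {y. y \<notin> T - {x} \<and> y \<le> n \<and> n - y \<notin> T - {x}}"
    using frob x by (intro Lset_eq) auto
  also have "\<dots> = insert x (insert (n - x) (Lset T))"
    unfolding LT using x \<open>n - x \<notin> T\<close> by auto
  finally have "lnum (T - {x}) = card (insert x (insert (n - x) (Lset T)))"
    unfolding lnum_def by simp
  moreover have "x \<notin> Lset T" "n - x \<notin> Lset T" "x \<noteq> n - x"
    unfolding LT using x by auto
  ultimately show ?thesis
    unfolding lnum_def using finite_Lset[OF frob] by simp
qed

lemma numerical_semigroup_insert:
  assumes S: "numerical_semigroup S"
    and double: "x + x \<in> S" and shift: "\<And>s. s \<in> S \<Longrightarrow> s \<noteq> 0 \<Longrightarrow> x + s \<in> S"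
  shows "numerical_semigroup (insert x S)"
proof -
  have shift': "x + s \<in> insert x S" if "s \<in> S" for s
    using shift[OF that] by (cases "s = 0") auto
  have "a + b \<in> insert x S" if "a \<in> insert x S" "b \<in> insert x S" for a b
  proof (cases "a = x")
    case True
    then show ?thesis using that(2) double shift' by auto
  next
    case False
    then have "a \<in> S" using that(1) by simp
    then show ?thesis
      using that(2) S shift'[of a] unfolding numerical_semigroup_def by (auto simp: add.commute)
  qed
  moreover have "finite (UNIV - insert x S)"
    using S unfolding numerical_semigroup_def by (auto intro: finite_subset)
  ultimately show ?thesis using S unfolding numerical_semigroup_def by auto
qed

lemma mem_msg_insert:
  assumes S: "numerical_semigroup S" and "x \<notin> S"
  shows "x \<in> msg (insert x S)"
proof -
  have "0 \<in> S" using S unfolding numerical_semigroup_def by blast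
  then have "x \<noteq> 0" using \<open>x \<notin> S\<close> by metis
  moreover have "x \<noteq> a + b" if "a \<in> insert x S" "b \<in> insert x S" "a \<noteq> 0" "b \<noteq> 0" for a b
  proof (cases "a = x \<or> b = x")
    case False
    then have "a + b \<in> S" using that S unfolding numerical_semigroup_def by auto
    then show ?thesis using \<open>x \<notin> S\<close> by auto
  qed (use that in auto)
  ultimately show ?thesis unfolding msg_def by auto
qed

lemma Max_Lset_add_mem:
  assumes S: "0 \<in> S" "\<forall>a\<in>S. \<forall>b\<in>S. a + b \<in> S" "n \<notin> S" "\<And>m. n < m \<Longrightarrow> m \<in> S"
    and x: "x \<in> Lset S" "\<And>y. y \<in> Lset S \<Longrightarrow> y \<le> x"
    and s: "s \<in> S" "s \<noteq> 0"
  shows "x + s \<in> S"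
proof (rule ccontr)
  assume gap: "x + s \<notin> S"
  have L: "Lset S = {y. y \<notin> S \<and> y \<le> n \<and> n - y \<notin> S}" using S(1,3,4) by (rule Lset_eq)
  have "x + s \<le> n" using gap S(4) not_le by blast
  moreover have "n - (x + s) \<notin> S"
  proof
    assume "n - (x + s) \<in> S"
    then have "n - (x + s) + s \<in> S" using S(2) s(1) by blast
    then show False using x(1) \<open>x + s \<le> n\<close> unfolding L by simp
  qed
  ultimately have "x + s \<in> Lset S" using gap unfolding L by simp
  then show False using x(2) s(2) by fastforce
qed

lemma Max_Lset_double_gt:
  assumes S: "0 \<in> S" "n \<notin> S" "\<And>m. n < m \<Longrightarrow> m \<in> S"
    and card: "2 \<le> lnum S"
  shows "n < 2 * Max (Lset S)"
proof (rule ccontr)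
  assume small: "\<not> n < 2 * Max (Lset S)"
  have L: "Lset S = {y. y \<notin> S \<and> y \<le> n \<and> n - y \<notin> S}" using S by (rule Lset_eq)
  have fin: "finite (Lset S)" using S by (rule finite_Lset)
  have "y = Max (Lset S)" if "y \<in> Lset S" for y
  proof -
    have "y \<le> n" "n - y \<in> Lset S" using that unfolding L by auto
    then have "n - y \<le> Max (Lset S)" "y \<le> Max (Lset S)" using that fin by simp_all
    then show ?thesis using small \<open>y \<le> n\<close> by linarith
  qed
  then have "Lset S \<subseteq> {Max (Lset S)}" by blast
  then have "lnum S \<le> card {Max (Lset S)}" unfolding lnum_def by (intro card_mono) auto
  then show False using card by simp
qed

lemma exists_large_generator_insert:
  assumes S: "numerical_semigroup S" "frobenius S = int n" and card: "2 \<le> lnum S"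
  obtains x where "x \<notin> S" "x < n" "n < 2 * x"
    "numerical_semigroup (insert x S)" "x \<in> msg (insert x S)"
proof -
  have frob: "0 \<in> S" "\<forall>a\<in>S. \<forall>b\<in>S. a + b \<in> S" "n \<notin> S" "\<And>m. n < m \<Longrightarrow> m \<in> S"
    using S unfolding frobenius_eq_int_iff[OF S(1)] numerical_semigroup_def by auto
  have fin: "finite (Lset S)" using frob(1,3,4) by (rule finite_Lset)
  have L: "Lset S = {y. y \<notin> S \<and> y \<le> n \<and> n - y \<notin> S}" using frob(1,3,4) by (rule Lset_eq)
  define x where "x = Max (Lset S)"
  have "Lset S \<noteq> {}" using card unfolding lnum_def by auto
  then have x: "x \<in> Lset S" "\<And>y. y \<in> Lset S \<Longrightarrow> y \<le> x"
    using fin unfolding x_def by simp_all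
  have "x \<notin> S" "x \<le> n" "n - x \<notin> S" using x(1) unfolding L by simp_all
  moreover have "x \<noteq> n" using \<open>n - x \<notin> S\<close> frob(1) by auto
  moreover have double: "n < 2 * x" unfolding x_def using frob(1,3,4) card by (rule Max_Lset_double_gt)
  moreover have "numerical_semigroup (insert x S)"
    using S(1) frob(4)[of "x + x"] double Max_Lset_add_mem[OF frob x]
    by (intro numerical_semigroup_insert) auto
  moreover have "x \<in> msg (insert x S)" using S(1) \<open>x \<notin> S\<close> by (rule mem_msg_insert)
  ultimately show thesis using that by simp
qed

theorem proposition10:
  fixes F :: int and l :: nat and S :: "nat set"
  assumes "F > 0"
    and "numerical_semigroup S"
    and "frobenius S = F"
  shows "(lnum S = l \<and> l \<ge> 2) \<longleftrightarrow>
    (\<exists>T x. numerical_semigroup T \<and> frobenius T = F \<and> x \<in> msg T \<and>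
       int (lnum T) = int l - 2 \<and> F < 2 * int x \<and> int x < F \<and> S = T - {x})"
proof -
  obtain n where F: "F = int n" using assms(1) by (metis nonneg_int_cases less_imp_le)
  show ?thesis
  proof
    assume l: "lnum S = l \<and> l \<ge> 2"
    then obtain x where x: "x \<notin> S" "x < n" "n < 2 * x"
      and T: "numerical_semigroup (insert x S)" "x \<in> msg (insert x S)"
      using exists_large_generator_insert assms(2,3) F by metis
    have "frobenius (insert x S) = int n"
      using x(2) assms(2,3) F by (auto intro!: frobenius_eqI simp: frobenius_eq_int_iff)
    moreover have "lnum S = lnum (insert x S) + 2"
      using lnum_Diff_large_element[OF T(1) calculation, of x] x by simp
    ultimately show "\<exists>T x. numerical_semigroup T \<and> frobenius T = F \<and> x \<in> msg T \<and>
        int (lnum T) = int l - 2 \<and> F < 2 * int x \<and> int x < F \<and> S = T - {x}"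
      using T x F l by (intro exI[of _ "insert x S"] exI[of _ x]) auto
  next
    assume "\<exists>T x. numerical_semigroup T \<and> frobenius T = F \<and> x \<in> msg T \<and>
        int (lnum T) = int l - 2 \<and> F < 2 * int x \<and> int x < F \<and> S = T - {x}"
    then obtain T x where T: "numerical_semigroup T" "frobenius T = int n" "x \<in> msg T"
      "int (lnum T) = int l - 2" "n < 2 * x" "x < n" "S = T - {x}" using F by auto
    then have "lnum S = lnum T + 2"
      using lnum_Diff_large_element[OF T(1,2)] unfolding msg_def by auto
    then show "lnum S = l \<and> l \<ge> 2" using T(4) by linarith
  qed
qed

end
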